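(* Consider the coordination game ($\mathcal V_c=\mathcal V$). (1) If $x^*$ is a Nash equilibrium and $z^*=z(x^* )$, then $z^*=F_c\!\left(\frac{n}{n-1}(z^*-\epsilon_c)\right)$ for every $\epsilon_c\in(0,\tfrac1n]$. (2) Conversely, if $z^*\in\{0,\tfrac1n,\dots,1\}$ satisfies $z^*=F_c\!\left(\frac{n}{n-1}(z^*-\epsilon_c)\right)$ for every $\epsilon_c\in(0,\tfrac1n]$, then there exists a Nash equilibrium $x^*$ with $z(x^* )=z^*$.
   Context: Let $\mathcal V$ be a finite set of $n\ge2$ agents, all coordinating. Given real weights $d_i$, the coordination game has action set $\{-1,+1\}$, configuration space $\mathcal X=\{-1,+1\}^{\mathcal V}$ and utilities $u_i(x)=\sum_{j\neq i}x_ix_j-d_ix_i$. A (pure) Nash equilibrium is an $x\in\mathcal X$ with $u_i(x)\ge u_i(y_i,x_{-i})$ for all $i$ and $y_i\in\{-1,+1\}$. Thresholds: $r_i=\tfrac12+\tfrac{d_i}{2(n-1)}$. For $x\in\mathcal X$, $z(x)=\frac1n|\{i: x_i=+1\}|$. The threshold CDF is $F_c(t)=\frac1n|\{i\in\mathcal V: r_i\le t\}|$, $t\in\mathbb R$. *)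

theory Defs
  imports "HOL-Library.FuncSet" Complex_Main
begin

definition configs :: "'a set \<Rightarrow> ('a \<Rightarrow> real) set" where
  "configs V = V \<rightarrow>\<^sub>E {-1, 1}"

definition utility :: "'a set \<Rightarrow> ('a \<Rightarrow> real) \<Rightarrow> 'a \<Rightarrow> ('a \<Rightarrow> real) \<Rightarrow> real" where
  "utility V d i x = (\<Sum>j\<in>V - {i}. x i * x j) - d i * x i"

definition nash_eq :: "'a set \<Rightarrow> ('a \<Rightarrow> real) \<Rightarrow> ('a \<Rightarrow> real) \<Rightarrow> bool" where
  "nash_eq V d x \<longleftrightarrow> x \<in> configs V \<and>
     (\<forall>i\<in>V. \<forall>y\<in>{-1, 1::real}. utility V d i x \<ge> utility V d i (x(i := y)))"

definition threshold :: "'a set \<Rightarrow> ('a \<Rightarrow> real) \<Rightarrow> 'a \<Rightarrow> real" where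
  "threshold V d i = 1/2 + d i / (2 * (real (card V) - 1))"

definition zfrac :: "'a set \<Rightarrow> ('a \<Rightarrow> real) \<Rightarrow> real" where
  "zfrac V x = real (card {i\<in>V. x i = 1}) / real (card V)"

definition Fc :: "'a set \<Rightarrow> ('a \<Rightarrow> real) \<Rightarrow> real \<Rightarrow> real" where
  "Fc V d t = real (card {i\<in>V. threshold V d i \<le> t}) / real (card V)"

end

theory Submission
  imports Defs
begin

text \<open>Agent i prefers +1 exactly when the fraction of the other agents playing +1 is at least
its threshold r_i. So a configuration with m agents on +1 is an equilibrium iff every +1-agent has
r_i \<le> (m - 1)/(n - 1) and every -1-agent has r_i \<ge> m/(n - 1); equivalently, exactly m thresholds
are \<le> t for every t in the window [(m - 1)/(n - 1), m/(n - 1)). As \<epsilon> ranges over (0, 1/n],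
the argument n/(n - 1) (m/n - \<epsilon>) sweeps exactly this window, so the counting condition is the
fixed-point equation for F_c. Conversely, when it holds, letting precisely the agents with
r_i \<le> (m - 1)/(n - 1) play +1 gives an equilibrium.\<close>

lemma sum_config:
  assumes "finite V" and "x \<in> configs V"
  shows "(\<Sum>j\<in>V. x j) = 2 * real (card {i\<in>V. x i = 1}) - real (card V)"
proof -
  let ?P = "{i\<in>V. x i = 1}"
  have sub: "?P \<subseteq> V" by auto
  have "(\<Sum>j\<in>V. x j) = (\<Sum>j\<in>V - ?P. x j) + (\<Sum>j\<in>?P. x j)"
    by (rule sum.subset_diff[OF sub assms(1)])
  moreover have "(\<Sum>j\<in>V - ?P. x j) = (\<Sum>j\<in>V - ?P. -1)"
    using assms(2) unfolding configs_def by (intro sum.cong) (auto simp: PiE_iff)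
  moreover have "card (V - ?P) = card V - card ?P"
    using card_Diff_subset[OF finite_subset[OF sub assms(1)] sub] by simp
  moreover have "card ?P \<le> card V" using card_mono[OF assms(1) sub] .
  ultimately show ?thesis by (simp add: of_nat_diff)
qed

lemma utility_gain:
  "utility V d i x - utility V d i (x(i := y)) = (x i - y) * ((\<Sum>j\<in>V - {i}. x j) - d i)"
proof -
  have deviate: "(\<Sum>j\<in>V - {i}. (x(i := y)) i * (x(i := y)) j) = y * (\<Sum>j\<in>V - {i}. x j)"
    by (simp add: sum_distrib_left)
  have stay: "(\<Sum>j\<in>V - {i}. x i * x j) = x i * (\<Sum>j\<in>V - {i}. x j)"
    by (simp add: sum_distrib_left)
  show ?thesis
    unfolding utility_def deviate stay by (simp add: algebra_simps)
qed

lemma threshold_scaled: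
  assumes "card V \<ge> 2"
  shows "threshold V d i * (real (card V) - 1) = (real (card V) - 1 + d i) / 2"
  using assms by (simp add: threshold_def field_simps)

lemma threshold_le_iff:
  assumes "card V \<ge> 2"
  shows "threshold V d i \<le> (m - 1) / (real (card V) - 1) \<longleftrightarrow> d i \<le> 2 * m - real (card V) - 1"
proof -
  have "real (card V) - 1 > 0" using assms by simp
  then show ?thesis using threshold_scaled[OF assms, of d i] by (simp add: le_divide_eq) linarith
qed

lemma threshold_ge_iff:
  assumes "card V \<ge> 2"
  shows "m / (real (card V) - 1) \<le> threshold V d i \<longleftrightarrow> 2 * m - real (card V) + 1 \<le> d i"
proof -
  have "real (card V) - 1 > 0" using assms by simp
  then show ?thesis using threshold_scaled[OF assms, of d i] by (simp add: divide_le_eq) linarith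
qed

text \<open>A +1-agent sees m - 1 other agents on +1, a -1-agent sees m; hence the two different bounds.\<close>

lemma best_response_iff:
  assumes "finite V" and "card V \<ge> 2" and "x \<in> configs V" and "i \<in> V"
  shows "(\<forall>y\<in>{-1, 1}. utility V d i (x(i := y)) \<le> utility V d i x) \<longleftrightarrow>
    (if x i = 1 then threshold V d i \<le> (real (card {j\<in>V. x j = 1}) - 1) / (real (card V) - 1)
     else real (card {j\<in>V. x j = 1}) / (real (card V) - 1) \<le> threshold V d i)"
proof -
  let ?m = "real (card {j\<in>V. x j = 1})"
  have xi: "x i = 1 \<or> x i = -1" using assms(3,4) unfolding configs_def by (auto simp: PiE_iff)
  have "(\<Sum>j\<in>V - {i}. x j) = 2 * ?m - real (card V) - x i"
    using sum_config[OF assms(1,3)] sum.remove[OF assms(1,4), of x] by simp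
  then have gain: "(\<forall>y\<in>{-1, 1}. utility V d i (x(i := y)) \<le> utility V d i x) \<longleftrightarrow>
      (\<forall>y\<in>{-1, 1::real}. 0 \<le> (x i - y) * (2 * ?m - real (card V) - x i - d i))"
    using utility_gain[of V d i x] by (smt (verit))
  show ?thesis
  proof (cases "x i = 1")
    case True
    then show ?thesis
      unfolding gain threshold_le_iff[OF assms(2)] by (auto simp: zero_le_mult_iff)
  next
    case False
    with xi have "x i = -1" by simp
    then show ?thesis
      unfolding gain threshold_ge_iff[OF assms(2)] by (auto simp: zero_le_mult_iff)
  qed
qed


lemma nash_eq_iff:
  assumes "finite V" and "card V \<ge> 2"
  shows "nash_eq V d x \<longleftrightarrow> x \<in> configs V \<and> (\<forall>i\<in>V.
    if x i = 1 then threshold V d i \<le> (real (card {j\<in>V. x j = 1}) - 1) / (real (card V) - 1)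
    else real (card {j\<in>V. x j = 1}) / (real (card V) - 1) \<le> threshold V d i)"
  using best_response_iff[OF assms, of x _ d] unfolding nash_eq_def by blast

text \<open>The fixed-point condition for F_c at z = k/n, rewritten over the window that
n/(n - 1) (z - \<epsilon>) sweeps for \<epsilon> \<in> (0, 1/n].\<close>

definition stable_count :: "'a set \<Rightarrow> ('a \<Rightarrow> real) \<Rightarrow> nat \<Rightarrow> bool" where
  "stable_count V d k \<longleftrightarrow> (\<forall>t. (real k - 1) / (real (card V) - 1) \<le> t \<and> t < real k / (real (card V) - 1)
     \<longrightarrow> card {i\<in>V. threshold V d i \<le> t} = k)"

lemma rescaled_level_iff:
  fixes n k t :: real
  assumes "n > 1"
  shows "(\<exists>\<epsilon>. 0 < \<epsilon> \<and> \<epsilon> \<le> 1 / n \<and> t = n / (n - 1) * (k / n - \<epsilon>)) \<longleftrightarrow>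
    (k - 1) / (n - 1) \<le> t \<and> t < k / (n - 1)"
proof
  assume "\<exists>\<epsilon>. 0 < \<epsilon> \<and> \<epsilon> \<le> 1 / n \<and> t = n / (n - 1) * (k / n - \<epsilon>)"
  then obtain \<epsilon> where "0 < \<epsilon>" "\<epsilon> \<le> 1 / n" and "t = n / (n - 1) * (k / n - \<epsilon>)"
    by blast
  moreover have "n / (n - 1) * (k / n - \<epsilon>) = (k - n * \<epsilon>) / (n - 1)"
    using assms by (simp add: field_simps)
  moreover have "0 < n * \<epsilon>" "n * \<epsilon> \<le> 1"
    using \<open>0 < \<epsilon>\<close> \<open>\<epsilon> \<le> 1 / n\<close> assms by (auto simp: field_simps)
  ultimately show "(k - 1) / (n - 1) \<le> t \<and> t < k / (n - 1)"
    using assms by (auto intro: divide_right_mono divide_strict_right_mono)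
next
  assume "(k - 1) / (n - 1) \<le> t \<and> t < k / (n - 1)"
  then have t: "k - 1 \<le> (n - 1) * t" "(n - 1) * t < k"
    using assms by (simp_all add: pos_divide_le_eq pos_less_divide_eq mult.commute)
  show "\<exists>\<epsilon>. 0 < \<epsilon> \<and> \<epsilon> \<le> 1 / n \<and> t = n / (n - 1) * (k / n - \<epsilon>)"
  proof (intro exI conjI)
    show "0 < (k - (n - 1) * t) / n" "(k - (n - 1) * t) / n \<le> 1 / n"
      using t assms by (simp_all add: divide_right_mono)
    show "t = n / (n - 1) * (k / n - (k - (n - 1) * t) / n)"
      using assms by (simp add: field_simps)
  qed
qed

lemma Fc_fixed_point_iff_stable_count:
  assumes "card V \<ge> 2"
  shows "(\<forall>\<epsilon>. 0 < \<epsilon> \<and> \<epsilon> \<le> 1 / real (card V) \<longrightarrow>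
      real k / real (card V) = Fc V d (real (card V) / (real (card V) - 1) * (real k / real (card V) - \<epsilon>)))
    \<longleftrightarrow> stable_count V d k"
proof -
  let ?n = "real (card V)"
  have n: "?n > 1" using assms by simp
  have Fc_eq: "real k / ?n = Fc V d t \<longleftrightarrow> card {i\<in>V. threshold V d i \<le> t} = k" for t
    using assms by (auto simp: Fc_def)
  have "(\<forall>\<epsilon>. 0 < \<epsilon> \<and> \<epsilon> \<le> 1 / ?n \<longrightarrow> real k / ?n = Fc V d (?n / (?n - 1) * (real k / ?n - \<epsilon>)))
      \<longleftrightarrow> (\<forall>t. (\<exists>\<epsilon>. 0 < \<epsilon> \<and> \<epsilon> \<le> 1 / ?n \<and> t = ?n / (?n - 1) * (real k / ?n - \<epsilon>))
        \<longrightarrow> real k / ?n = Fc V d t)"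
    by blast
  also have "\<dots> \<longleftrightarrow> stable_count V d k"
    unfolding stable_count_def Fc_eq rescaled_level_iff[OF n] ..
  finally show ?thesis .
qed


lemma nash_eq_stable_count:
  assumes "finite V" and "card V \<ge> 2" and "nash_eq V d x"
  shows "stable_count V d (card {i\<in>V. x i = 1})"
  unfolding stable_count_def
proof (intro allI impI)
  let ?m = "real (card {i\<in>V. x i = 1})"
  fix t
  assume t: "(?m - 1) / (real (card V) - 1) \<le> t \<and> t < ?m / (real (card V) - 1)"
  have "\<forall>i\<in>V. if x i = 1 then threshold V d i \<le> (?m - 1) / (real (card V) - 1)
      else ?m / (real (card V) - 1) \<le> threshold V d i"
    using assms nash_eq_iff by blast
  then have "{i\<in>V. threshold V d i \<le> t} = {i\<in>V. x i = 1}"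
    using t by (fastforce split: if_splits)
  then show "card {i\<in>V. threshold V d i \<le> t} = card {i\<in>V. x i = 1}"
    by simp
qed

lemma stable_count_gap:
  assumes "finite V" and "stable_count V d k" and "i \<in> V"
    and "(real k - 1) / (real (card V) - 1) < threshold V d i"
  shows "real k / (real (card V) - 1) \<le> threshold V d i"
proof (rule ccontr)
  let ?A = "{j\<in>V. threshold V d j \<le> (real k - 1) / (real (card V) - 1)}"
  let ?B = "{j\<in>V. threshold V d j \<le> threshold V d i}"
  assume "\<not> ?thesis"
  then have "card ?A = k" and "card ?B = k"
    using assms(2,4) unfolding stable_count_def by auto
  moreover have "insert i ?A \<subseteq> ?B"
    using assms(3,4) by auto
  then have "card (insert i ?A) \<le> card ?B"
    using assms(1) by (intro card_mono) auto
  moreover have "i \<notin> ?A"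
    using assms(4) by auto
  ultimately show False
    using assms(1) by simp
qed

lemma stable_count_imp_nash_eq:
  assumes "finite V" and "card V \<ge> 2" and "stable_count V d k"
  obtains x where "nash_eq V d x" and "card {i\<in>V. x i = 1} = k"
proof -
  let ?t = "(real k - 1) / (real (card V) - 1)"
  define x where "x = (\<lambda>i\<in>V. if threshold V d i \<le> ?t then 1 else -1 :: real)"
  have positive: "{i\<in>V. x i = 1} = {i\<in>V. threshold V d i \<le> ?t}"
    by (auto simp: x_def)
  have "?t < real k / (real (card V) - 1)"
    using assms(2) by (simp add: divide_strict_right_mono)
  then have count: "card {i\<in>V. x i = 1} = k"
    using assms(3) unfolding positive stable_count_def by simp
  have "nash_eq V d x"
    unfolding nash_eq_iff[OF assms(1,2)] count
    using stable_count_gap[OF assms(1,3)]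
    by (auto simp: configs_def x_def not_le)
  then show thesis using count by (rule that)
qed

theorem corollary1:
  fixes V :: "'a set" and d :: "'a \<Rightarrow> real"
  assumes "finite V" and "card V \<ge> 2"
  shows "(\<forall>x. nash_eq V d x \<longrightarrow>
            (\<forall>\<epsilon>::real. 0 < \<epsilon> \<and> \<epsilon> \<le> 1 / real (card V) \<longrightarrow>
               zfrac V x = Fc V d (real (card V) / (real (card V) - 1) * (zfrac V x - \<epsilon>))))
       \<and> (\<forall>zs::real. (\<exists>k::nat. k \<le> card V \<and> zs = real k / real (card V)) \<and>
            (\<forall>\<epsilon>::real. 0 < \<epsilon> \<and> \<epsilon> \<le> 1 / real (card V) \<longrightarrow>
               zs = Fc V d (real (card V) / (real (card V) - 1) * (zs - \<epsilon>)))
            \<longrightarrow> (\<exists>x. nash_eq V d x \<and> zfrac V x = zs))"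
proof (intro conjI allI impI)
  fix x :: "'a \<Rightarrow> real" and \<epsilon> :: real
  assume "nash_eq V d x" and "0 < \<epsilon> \<and> \<epsilon> \<le> 1 / real (card V)"
  moreover have "stable_count V d (card {i\<in>V. x i = 1})"
    using assms \<open>nash_eq V d x\<close> by (rule nash_eq_stable_count)
  ultimately show "zfrac V x = Fc V d (real (card V) / (real (card V) - 1) * (zfrac V x - \<epsilon>))"
    unfolding zfrac_def Fc_fixed_point_iff_stable_count[OF assms(2), symmetric] by blast
next
  fix zs :: real
  assume "(\<exists>k::nat. k \<le> card V \<and> zs = real k / real (card V)) \<and>
    (\<forall>\<epsilon>. 0 < \<epsilon> \<and> \<epsilon> \<le> 1 / real (card V) \<longrightarrow>
      zs = Fc V d (real (card V) / (real (card V) - 1) * (zs - \<epsilon>)))"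
  then obtain k where zs: "zs = real k / real (card V)" and "stable_count V d k"
    using Fc_fixed_point_iff_stable_count[OF assms(2)] by blast
  then obtain x where "nash_eq V d x" and "card {i\<in>V. x i = 1} = k"
    using stable_count_imp_nash_eq[OF assms] by blast
  then show "\<exists>x. nash_eq V d x \<and> zfrac V x = zs"
    unfolding zfrac_def zs by blast
qed

end
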